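(* Let $X$ be a quasi-Banach rearrangement invariant space on $\mathbb{R}$ and let $p>0$. Then there exist a number $0<u\le p$ and a constant $c$ such that for every $n$ and all $f_1,\dots,f_n\in X$, $$\Big\|\Big(\sum_{i=1}^n|f_i|^p\Big)^{1/p}\Big\|_X\le c\Big(\sum_{i=1}^n\|f_i\|_X^u\Big)^{1/u}.$$
   Context: For measurable $f$, $f^*(s)=\sup\{t:\text{measure}\{|f|>t\}>s\}$. A rearrangement invariant (r.i.) space $X$ on $\mathbb{R}$ is a set of measurable functions (modulo a.e. equality) with a complete quasi-norm $\|\cdot\|_X$ such that: (1) if $g^*\le f^*$ and $f\in X$ then $g\in X$ and $\|g\|_X\le\|f\|_X$; (2) every simple function with support of finite measure is in $X$; (3) either $f_n\searrow 0$ implies $\|f_n\|_X\searrow 0$, or $0\le f_n\nearrow f$ with $\sup_n\|f_n\|_X<\infty$ implies $f\in X$ and $\|f\|_X=\sup_n\|f_n\|_X$. *)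

theory Defs
  imports "HOL-Analysis.Analysis"
begin

definition drearr :: "(real \<Rightarrow> real) \<Rightarrow> real \<Rightarrow> ereal" where
  "drearr f s = Sup {ereal t | t. emeasure lebesgue {x. \<bar>f x\<bar> > t} > ennreal s}"

definition simple_fin_supp :: "(real \<Rightarrow> real) \<Rightarrow> bool" where
  "simple_fin_supp f \<longleftrightarrow> f \<in> borel_measurable lebesgue \<and> finite (range f)
     \<and> emeasure lebesgue {x. f x \<noteq> 0} < \<infinity>"

text \<open>Complete quasi-norm N on a set X of (Lebesgue measurable, real-valued)
  functions forming a vector space (elements are identified modulo a.e. equality:
  N f = 0 iff f = 0 a.e.).\<close>
definition quasi_banach :: "(real \<Rightarrow> real) set \<Rightarrow> ((real \<Rightarrow> real) \<Rightarrow> real) \<Rightarrow> bool" where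
  "quasi_banach X N \<longleftrightarrow>
     X \<subseteq> borel_measurable lebesgue \<and>
     (\<lambda>x. 0) \<in> X \<and>
     (\<forall>f\<in>X. \<forall>g\<in>X. (\<lambda>x. f x + g x) \<in> X) \<and>
     (\<forall>f\<in>X. \<forall>a. (\<lambda>x. a * f x) \<in> X) \<and>
     (\<forall>f\<in>X. N f \<ge> 0) \<and>
     (\<forall>f\<in>X. N f = 0 \<longleftrightarrow> (AE x in lebesgue. f x = 0)) \<and>
     (\<forall>f\<in>X. \<forall>a. N (\<lambda>x. a * f x) = \<bar>a\<bar> * N f) \<and>
     (\<exists>K. \<forall>f\<in>X. \<forall>g\<in>X. N (\<lambda>x. f x + g x) \<le> K * (N f + N g)) \<and>
     (\<forall>F. (\<forall>n. F n \<in> X) \<longrightarrow>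
        (\<forall>e>0. \<exists>M. \<forall>m\<ge>M. \<forall>n\<ge>M. N (\<lambda>x. F m x - F n x) < e) \<longrightarrow>
        (\<exists>g\<in>X. (\<lambda>n. N (\<lambda>x. F n x - g x)) \<longlonglongrightarrow> 0))"

definition ri_space :: "(real \<Rightarrow> real) set \<Rightarrow> ((real \<Rightarrow> real) \<Rightarrow> real) \<Rightarrow> bool" where
  "ri_space X N \<longleftrightarrow>
     quasi_banach X N \<and>
     (\<forall>f\<in>X. \<forall>g. g \<in> borel_measurable lebesgue \<longrightarrow>
        (\<forall>s\<ge>0. drearr g s \<le> drearr f s) \<longrightarrow> g \<in> X \<and> N g \<le> N f) \<and>
     (\<forall>f. simple_fin_supp f \<longrightarrow> f \<in> X) \<and>
     ((\<forall>F. (\<forall>n. F n \<in> X) \<longrightarrow> (\<forall>n x. 0 \<le> F (Suc n) x \<and> F (Suc n) x \<le> F n x) \<longrightarrow>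
          (\<forall>x. (\<lambda>n. F n x) \<longlonglongrightarrow> 0) \<longrightarrow> (\<lambda>n. N (F n)) \<longlonglongrightarrow> 0)
      \<or>
      (\<forall>F f. (\<forall>n. F n \<in> X) \<longrightarrow> (\<forall>n x. 0 \<le> F n x \<and> F n x \<le> F (Suc n) x) \<longrightarrow>
          (\<forall>x. (\<lambda>n. F n x) \<longlonglongrightarrow> f x) \<longrightarrow> bdd_above (range (\<lambda>n. N (F n))) \<longrightarrow>
          f \<in> X \<and> N f = (SUP n. N (F n))))"

end

theory Submission
  imports Defs
begin

text \<open>
  For finite I put h(I) = (\<Sum>i\<in>I. |f i|^p)^(1/p). Pointwise
  h(I \<union> J) \<le> 2^(1/p) (h(I) + h(J)) for disjoint I and J, so the lattice property and the
  quasi-triangle inequality make M(I) = N(h(I))^p quasi-subadditive: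
  M(I \<union> J) \<le> L (M(I) + M(J)). Choose m with 2^m \<ge> 2 (L + L^2) and weights
  w i = N(f i)^(p/m). Splitting I at a weighted median leaves two parts of at most half
  the total weight, whose bounds from the induction hypothesis carry a factor 2^-m that
  absorbs the constants; hence M(I) \<le> 2 L^2 (\<Sum>i\<in>I. w i)^m, which is the claim with
  u = p/m.
\<close>

lemma powr_quasi_triangle:
  fixes a b z C p :: real
  assumes "0 \<le> a" "0 \<le> b" "0 \<le> z" "0 \<le> C" "0 \<le> p" and "z \<le> C * (a + b)"
  shows "z powr p \<le> (2 * C) powr p * (a powr p + b powr p)"
proof -
  have "C * (a + b) \<le> C * (2 * max a b)" using assms by (intro mult_left_mono) auto
  then have "z \<le> (2 * C) * max a b" using assms by simp
  then have "z powr p \<le> ((2 * C) * max a b) powr p" using assms by (intro powr_mono2) auto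
  also have "\<dots> = (2 * C) powr p * max a b powr p" using assms by (simp add: powr_mult)
  also have "max a b powr p \<le> a powr p + b powr p" by (simp add: max_def)
  then have "(2 * C) powr p * max a b powr p \<le> (2 * C) powr p * (a powr p + b powr p)"
    by (intro mult_left_mono) auto
  finally show ?thesis .
qed

lemma weighted_median_split:
  fixes w :: "'a::linorder \<Rightarrow> real"
  assumes I: "finite I" "I \<noteq> {}" and w: "\<And>i. i \<in> I \<Longrightarrow> 0 \<le> w i"
  obtains A j B where "I = A \<union> ({j} \<union> B)" "j \<notin> A" "j \<notin> B" "A \<inter> B = {}"
    "sum w A \<le> sum w I / 2" "sum w B \<le> sum w I / 2"
proof -
  define T where "T = {j\<in>I. sum w I / 2 \<le> sum w {i\<in>I. i \<le> j}}"
  have "{i\<in>I. i \<le> Max I} = I" using I by auto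
  then have "Max I \<in> T" using I w by (simp add: T_def sum_nonneg)
  then have "T \<noteq> {}" by blast
  have "finite T" using I by (simp add: T_def)
  define j where "j = Min T"
  have jT: "j \<in> T" using \<open>T \<noteq> {}\<close> \<open>finite T\<close> by (simp add: j_def)
  have split: "sum w I = sum w {i\<in>I. i \<le> j} + sum w {i\<in>I. j < i}"
    using I by (subst sum.union_disjoint[symmetric]) (auto intro: sum.cong)
  have right: "sum w {i\<in>I. j < i} \<le> sum w I / 2"
    using jT split by (simp add: T_def)
  have left: "sum w {i\<in>I. i < j} \<le> sum w I / 2"
  proof (cases "{i\<in>I. i < j} = {}")
    case True
    then show ?thesis using w by (simp add: sum_nonneg del: Collect_empty_eq)
  next
    case False
    define k where "k = Max {i\<in>I. i < j}"
    have k: "k \<in> I" "k < j" using False I Max_in[of "{i\<in>I. i < j}"] by (auto simp: k_def)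
    have "k \<notin> T" using k \<open>finite T\<close> Min_le[of T k] unfolding j_def by (meson not_le)
    moreover have "{i\<in>I. i < j} = {i\<in>I. i \<le> k}"
      using k I by (auto simp: k_def intro: le_less_trans)
    ultimately show ?thesis using k by (simp add: T_def)
  qed
  show ?thesis
    by (rule that[of "{i\<in>I. i < j}" j "{i\<in>I. j < i}"]) (use jT right left in \<open>auto simp: T_def\<close>)
qed

lemma quasi_subadditive_le_sum_power:
  fixes M :: "'a::linorder set \<Rightarrow> real" and w :: "'a \<Rightarrow> real"
  assumes K: "1 \<le> K" and m: "2 * (K + K^2) \<le> 2 ^ m" and w: "\<And>i. 0 \<le> w i"
    and empty: "M {} \<le> 0" and singleton: "\<And>i. i \<in> D \<Longrightarrow> M {i} \<le> w i ^ m"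
    and union: "\<And>I J. finite I \<Longrightarrow> finite J \<Longrightarrow> I \<subseteq> D \<Longrightarrow> J \<subseteq> D \<Longrightarrow> I \<inter> J = {}
      \<Longrightarrow> M (I \<union> J) \<le> K * (M I + M J)"
    and I: "finite I" "I \<subseteq> D"
  shows "M I \<le> 2 * K^2 * (sum w I) ^ m"
  using I
proof (induction I rule: finite_psubset_induct)
  case (psubset I)
  show ?case
  proof (cases "I = {}")
    case True
    have "0 \<le> 2 * K^2 * (sum w I) ^ m" using w by (simp add: sum_nonneg)
    moreover have "M I \<le> 0" using empty True by simp
    ultimately show ?thesis by linarith
  next
    case False
    define S where "S = sum w I"
    have "0 \<le> S" using w by (simp add: S_def sum_nonneg)
    obtain A j B where split: "I = A \<union> ({j} \<union> B)" "j \<notin> A" "j \<notin> B" "A \<inter> B = {}"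
        "sum w A \<le> S / 2" "sum w B \<le> S / 2"
      by (rule weighted_median_split[of I w]) (use psubset.hyps False w in \<open>auto simp: S_def\<close>)
    have parts: "A \<subset> I" "B \<subset> I" "finite A" "finite B" "A \<subseteq> D" "B \<subseteq> D" "j \<in> D"
      using split psubset.hyps psubset.prems by auto
    have half: "M C \<le> 2 * K^2 * (S / 2) ^ m" if "C \<subset> I" "C \<subseteq> D" "sum w C \<le> S / 2" for C
    proof -
      have "M C \<le> 2 * K^2 * (sum w C) ^ m" using psubset.IH that by blast
      also have "\<dots> \<le> 2 * K^2 * (S / 2) ^ m"
        using that w by (intro mult_left_mono power_mono sum_nonneg) auto
      finally show ?thesis .
    qed
    have "w j \<le> S" unfolding S_def using split(1) psubset.hyps w by (intro member_le_sum) auto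
    then have "w j ^ m \<le> S ^ m" using w by (rule power_mono)
    then have Mj: "M {j} \<le> S ^ m" using singleton[OF parts(7)] by linarith
    have MA: "M A \<le> 2 * K^2 * (S / 2) ^ m" using half parts split by blast
    have MB: "M B \<le> 2 * K^2 * (S / 2) ^ m" using half parts split by blast
    have "2 * (K + K^2) * (S / 2) ^ m \<le> 2 ^ m * (S / 2) ^ m"
      using m \<open>0 \<le> S\<close> by (intro mult_right_mono) auto
    then have scaled_half: "2 * (K + K^2) * (S / 2) ^ m \<le> S ^ m"
      by (simp add: power_divide)
    have "M I \<le> K * (M A + M ({j} \<union> B))"
      using union[of A "{j} \<union> B"] parts split by auto
    also have "\<dots> \<le> K * (M A + K * (M {j} + M B))"
      using union[of "{j}" B] parts split K by simp
    also have "\<dots> \<le> K * (2 * K^2 * (S / 2) ^ m + K * (S ^ m + 2 * K^2 * (S / 2) ^ m))"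
      using MA MB Mj K by (intro mult_left_mono add_mono) auto
    also have "\<dots> = K^2 * S ^ m + K^2 * (2 * (K + K^2) * (S / 2) ^ m)"
      by (simp add: algebra_simps power2_eq_square)
    also have "\<dots> \<le> K^2 * S ^ m + K^2 * S ^ m"
      using scaled_half by (intro add_left_mono mult_left_mono) auto
    finally show ?thesis by (simp add: S_def)
  qed
qed

lemma quasi_banach_measurable:
  assumes "quasi_banach X N" "f \<in> X" shows "f \<in> borel_measurable lebesgue"
  using assms unfolding quasi_banach_def by (elim conjE) blast

lemma quasi_banach_zero: assumes "quasi_banach X N" shows "(\<lambda>x. 0) \<in> X"
  using assms unfolding quasi_banach_def by (elim conjE) blast

lemma quasi_banach_add:
  assumes "quasi_banach X N" "f \<in> X" "g \<in> X" shows "(\<lambda>x. f x + g x) \<in> X"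
  using assms unfolding quasi_banach_def by (elim conjE) blast

lemma quasi_banach_scale: assumes "quasi_banach X N" "f \<in> X" shows "(\<lambda>x. a * f x) \<in> X"
  using assms unfolding quasi_banach_def by (elim conjE) blast

lemma quasi_banach_norm_nonneg: assumes "quasi_banach X N" "f \<in> X" shows "0 \<le> N f"
  using assms unfolding quasi_banach_def by (elim conjE) blast

lemma quasi_banach_norm_zero: assumes "quasi_banach X N" shows "N (\<lambda>x. 0) = 0"
  using assms unfolding quasi_banach_def by (elim conjE) auto

lemma quasi_banach_norm_scale:
  assumes "quasi_banach X N" "f \<in> X" shows "N (\<lambda>x. a * f x) = \<bar>a\<bar> * N f"
  using assms unfolding quasi_banach_def by (elim conjE) blast

lemma quasi_banach_quasi_triangle:
  assumes "quasi_banach X N"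
  obtains K where "1 \<le> K" "\<And>f g. f \<in> X \<Longrightarrow> g \<in> X \<Longrightarrow> N (\<lambda>x. f x + g x) \<le> K * (N f + N g)"
proof -
  obtain K where K: "\<And>f g. f \<in> X \<Longrightarrow> g \<in> X \<Longrightarrow> N (\<lambda>x. f x + g x) \<le> K * (N f + N g)"
    using assms unfolding quasi_banach_def by (elim conjE) blast
  have "N (\<lambda>x. f x + g x) \<le> max K 1 * (N f + N g)" if "f \<in> X" "g \<in> X" for f g
    using K[OF that] quasi_banach_norm_nonneg[OF assms] that
    by (smt (verit) max.cobounded1 mult_right_mono)
  then show thesis using that[of "max K 1"] by simp
qed

lemma drearr_mono:
  assumes f: "f \<in> borel_measurable lebesgue" and le: "\<And>x. \<bar>g x\<bar> \<le> \<bar>f x\<bar>"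
  shows "drearr g s \<le> drearr f s"
  unfolding drearr_def
proof (rule Sup_subset_mono, safe)
  fix t assume t: "ennreal s < emeasure lebesgue {x. t < \<bar>g x\<bar>}"
  have "{x. t < \<bar>f x\<bar>} \<in> sets lebesgue"
    using borel_measurable_abs[OF f] unfolding borel_measurable_iff_greater by simp
  moreover have "{x. t < \<bar>g x\<bar>} \<subseteq> {x. t < \<bar>f x\<bar>}" using le by (auto intro: less_le_trans)
  ultimately have "emeasure lebesgue {x. t < \<bar>g x\<bar>} \<le> emeasure lebesgue {x. t < \<bar>f x\<bar>}"
    by (intro emeasure_mono)
  then show "\<exists>t'. ereal t = ereal t' \<and> ennreal s < emeasure lebesgue {x. t' < \<bar>f x\<bar>}"
    using t by auto
qed

lemma ri_space_quasi_banach: "ri_space X N \<Longrightarrow> quasi_banach X N"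
  unfolding ri_space_def by (elim conjE)

lemma ri_space_dominated:
  assumes ri: "ri_space X N" and f: "f \<in> X" and g: "g \<in> borel_measurable lebesgue"
    and le: "\<And>x. \<bar>g x\<bar> \<le> \<bar>f x\<bar>"
  shows "g \<in> X \<and> N g \<le> N f"
proof -
  have "drearr g s \<le> drearr f s" for s
    using drearr_mono[OF quasi_banach_measurable[OF ri_space_quasi_banach[OF ri] f] le] .
  moreover have "\<forall>f\<in>X. \<forall>g. g \<in> borel_measurable lebesgue \<longrightarrow>
      (\<forall>s\<ge>0. drearr g s \<le> drearr f s) \<longrightarrow> g \<in> X \<and> N g \<le> N f"
    using ri unfolding ri_space_def by (elim conjE)
  ultimately show ?thesis using f g by blast
qed

lemma ri_space_abs:
  assumes ri: "ri_space X N" and f: "f \<in> X"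
  shows "(\<lambda>x. \<bar>f x\<bar>) \<in> X" and "N (\<lambda>x. \<bar>f x\<bar>) = N f"
proof -
  have fm: "f \<in> borel_measurable lebesgue"
    using quasi_banach_measurable[OF ri_space_quasi_banach[OF ri] f] .
  have "(\<lambda>x. \<bar>f x\<bar>) \<in> X \<and> N (\<lambda>x. \<bar>f x\<bar>) \<le> N f"
    using ri_space_dominated[OF ri f borel_measurable_abs[OF fm]] by simp
  moreover from this have "N f \<le> N (\<lambda>x. \<bar>f x\<bar>)"
    using ri_space_dominated[OF ri _ fm] by simp
  ultimately show "(\<lambda>x. \<bar>f x\<bar>) \<in> X" "N (\<lambda>x. \<bar>f x\<bar>) = N f" by auto
qed

definition lp_sum :: "real \<Rightarrow> ('i \<Rightarrow> real \<Rightarrow> real) \<Rightarrow> 'i set \<Rightarrow> real \<Rightarrow> real" where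
  "lp_sum p f I = (\<lambda>x. (\<Sum>i\<in>I. \<bar>f i x\<bar> powr p) powr (1 / p))"

lemma lp_sum_empty [simp]: "lp_sum p f {} = (\<lambda>x. 0)"
  by (simp add: lp_sum_def)

lemma lp_sum_singleton: "p \<noteq> 0 \<Longrightarrow> lp_sum p f {i} = (\<lambda>x. \<bar>f i x\<bar>)"
  by (simp add: lp_sum_def powr_powr)

lemma lp_sum_nonneg: "0 \<le> lp_sum p f I x"
  by (simp add: lp_sum_def)

lemma lp_sum_measurable:
  assumes "\<And>i. i \<in> I \<Longrightarrow> f i \<in> borel_measurable M"
  shows "lp_sum p f I \<in> borel_measurable M"
  unfolding lp_sum_def
  by (intro powr_real_measurable borel_measurable_sum measurable_abs_powr borel_measurable_const assms)

lemma lp_sum_union_le: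
  assumes "finite I" "finite J" "I \<inter> J = {}" "0 < p"
  shows "lp_sum p f (I \<union> J) x \<le> 2 powr (1 / p) * (lp_sum p f I x + lp_sum p f J x)"
proof -
  define s where "s K = (\<Sum>i\<in>K. \<bar>f i x\<bar> powr p)" for K
  have "lp_sum p f (I \<union> J) x = (s I + s J) powr (1 / p)"
    using assms by (simp add: lp_sum_def s_def sum.union_disjoint)
  also have "\<dots> \<le> (2 * 1) powr (1 / p) * (s I powr (1 / p) + s J powr (1 / p))"
    using assms by (intro powr_quasi_triangle) (auto simp: s_def sum_nonneg)
  finally show ?thesis by (simp add: lp_sum_def s_def)
qed

lemma ri_space_lp_sum_union:
  assumes ri: "ri_space X N" and p: "0 < p" and IJ: "finite I" "finite J" "I \<inter> J = {}"
    and X: "lp_sum p f I \<in> X" "lp_sum p f J \<in> X"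
    and f: "\<And>i. i \<in> I \<union> J \<Longrightarrow> f i \<in> borel_measurable lebesgue"
  shows "lp_sum p f (I \<union> J) \<in> X"
    and "N (lp_sum p f (I \<union> J)) \<le> 2 powr (1 / p) * N (\<lambda>x. lp_sum p f I x + lp_sum p f J x)"
proof -
  note qb = ri_space_quasi_banach[OF ri]
  have sum_X: "(\<lambda>x. lp_sum p f I x + lp_sum p f J x) \<in> X" using qb X by (rule quasi_banach_add)
  have "lp_sum p f (I \<union> J) \<in> X \<and>
      N (lp_sum p f (I \<union> J)) \<le> N (\<lambda>x. 2 powr (1 / p) * (lp_sum p f I x + lp_sum p f J x))"
  proof (rule ri_space_dominated[OF ri quasi_banach_scale[OF qb sum_X]])
    show "lp_sum p f (I \<union> J) \<in> borel_measurable lebesgue"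
      using f by (rule lp_sum_measurable)
    show "\<bar>lp_sum p f (I \<union> J) x\<bar> \<le> \<bar>2 powr (1 / p) * (lp_sum p f I x + lp_sum p f J x)\<bar>" for x
      using lp_sum_union_le[OF IJ p, of f x] by (metis abs_ge_self abs_of_nonneg lp_sum_nonneg order.trans)
  qed
  moreover have "N (\<lambda>x. 2 powr (1 / p) * (lp_sum p f I x + lp_sum p f J x))
      = 2 powr (1 / p) * N (\<lambda>x. lp_sum p f I x + lp_sum p f J x)"
    using quasi_banach_norm_scale[OF qb sum_X] by simp
  ultimately show "lp_sum p f (I \<union> J) \<in> X"
    and "N (lp_sum p f (I \<union> J)) \<le> 2 powr (1 / p) * N (\<lambda>x. lp_sum p f I x + lp_sum p f J x)"
    by auto
qed

lemma ri_space_lp_sum_mem: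
  assumes ri: "ri_space X N" and p: "0 < p" and I: "finite I" and f: "\<And>i. i \<in> I \<Longrightarrow> f i \<in> X"
  shows "lp_sum p f I \<in> X"
  using I f
proof (induction I rule: finite_induct)
  case empty
  show ?case using quasi_banach_zero[OF ri_space_quasi_banach[OF ri]] by simp
next
  case (insert i I)
  have "lp_sum p f {i} \<in> X" using ri_space_abs(1)[OF ri] insert.prems p by (simp add: lp_sum_singleton)
  then have "lp_sum p f ({i} \<union> I) \<in> X"
    using insert quasi_banach_measurable[OF ri_space_quasi_banach[OF ri]]
    by (intro ri_space_lp_sum_union(1)[OF ri p]) auto
  then show ?case by simp
qed

lemma ri_space_lp_sum_powr_quasi_subadditive:
  assumes ri: "ri_space X N" and p: "0 < p" and K: "0 \<le> K"
    and triangle: "\<And>f g. f \<in> X \<Longrightarrow> g \<in> X \<Longrightarrow> N (\<lambda>x. f x + g x) \<le> K * (N f + N g)"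
    and IJ: "finite I" "finite J" "I \<inter> J = {}" and f: "\<And>i. i \<in> I \<union> J \<Longrightarrow> f i \<in> X"
  shows "N (lp_sum p f (I \<union> J)) powr p
    \<le> (2 * (2 powr (1 / p) * K)) powr p * (N (lp_sum p f I) powr p + N (lp_sum p f J) powr p)"
proof -
  note qb = ri_space_quasi_banach[OF ri]
  have X: "lp_sum p f I \<in> X" "lp_sum p f J \<in> X" "lp_sum p f (I \<union> J) \<in> X"
    using IJ f by (auto intro!: ri_space_lp_sum_mem[OF ri p])
  have "N (lp_sum p f (I \<union> J)) \<le> 2 powr (1 / p) * N (\<lambda>x. lp_sum p f I x + lp_sum p f J x)"
    using IJ X f quasi_banach_measurable[OF qb] by (intro ri_space_lp_sum_union(2)[OF ri p]) auto
  also have "\<dots> \<le> 2 powr (1 / p) * (K * (N (lp_sum p f I) + N (lp_sum p f J)))"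
    using triangle[OF X(1,2)] by (intro mult_left_mono) auto
  finally have "N (lp_sum p f (I \<union> J)) \<le> 2 powr (1 / p) * K * (N (lp_sum p f I) + N (lp_sum p f J))"
    by (simp add: mult.assoc)
  then show ?thesis
    by (rule powr_quasi_triangle[rotated -1]) (use X quasi_banach_norm_nonneg[OF qb] K p in auto)
qed

lemma ri_space_lp_sum_norm_le:
  fixes f :: "'i::linorder \<Rightarrow> real \<Rightarrow> real"
  assumes ri: "ri_space X N" and p: "0 < p" and K: "1 \<le> K"
    and triangle: "\<And>f g. f \<in> X \<Longrightarrow> g \<in> X \<Longrightarrow> N (\<lambda>x. f x + g x) \<le> K * (N f + N g)"
    and L_def: "L \<equiv> (2 * (2 powr (1 / p) * K)) powr p" and m: "2 * (L + L^2) \<le> 2 ^ m"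
    and I: "finite I" and f: "\<And>i. i \<in> I \<Longrightarrow> f i \<in> X"
  shows "N (lp_sum p f I) \<le> (2 * L^2) powr (1 / p) * (\<Sum>i\<in>I. N (f i) powr (p / m)) powr (m / p)"
proof -
  note qb = ri_space_quasi_banach[OF ri]
  have "1 * 1 \<le> 2 powr (1 / p) * K"
    using K p by (intro mult_mono ge_one_powr_ge_zero) auto
  then have "1 \<le> 2 * (2 powr (1 / p) * K)" by simp
  then have L: "1 \<le> L" unfolding L_def using p by (intro ge_one_powr_ge_zero) auto
  have "m \<noteq> 0"
  proof
    assume "m = 0"
    then have "2 * L + 2 * L^2 \<le> 1" using m by simp
    moreover have "0 \<le> L^2" by simp
    ultimately show False using L by linarith
  qed
  define M where "M J = N (lp_sum p f J) powr p" for J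
  define w where "w i = N (f i) powr (p / m)" for i
  have "M I \<le> 2 * L^2 * (sum w I) ^ m"
  proof (rule quasi_subadditive_le_sum_power[OF L m])
    show "M {} \<le> 0" using quasi_banach_norm_zero[OF qb] by (simp add: M_def)
    show "M {i} \<le> w i ^ m" if "i \<in> I" for i
      using \<open>m \<noteq> 0\<close> p ri_space_abs(2)[OF ri f[OF that]] quasi_banach_norm_nonneg[OF qb f[OF that]]
      by (simp add: M_def w_def lp_sum_singleton powr_realpow'[symmetric] powr_powr)
    show "M (J1 \<union> J2) \<le> L * (M J1 + M J2)"
      if "finite J1" "finite J2" "J1 \<subseteq> I" "J2 \<subseteq> I" "J1 \<inter> J2 = {}" for J1 J2
      unfolding M_def L_def using that f K
      by (intro ri_space_lp_sum_powr_quasi_subadditive[OF ri p _ triangle]) auto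
  qed (use I in \<open>auto simp: w_def\<close>)
  have "N (lp_sum p f I) = M I powr (1 / p)"
    using p quasi_banach_norm_nonneg[OF qb ri_space_lp_sum_mem[OF ri p I f]]
    by (simp add: M_def powr_powr)
  also have "\<dots> \<le> (2 * L^2 * (sum w I) ^ m) powr (1 / p)"
    using \<open>M I \<le> _\<close> p by (intro powr_mono2) (auto simp: M_def)
  also have "\<dots> = (2 * L^2) powr (1 / p) * (sum w I) powr (m / p)"
    using \<open>m \<noteq> 0\<close> by (simp add: w_def sum_nonneg powr_mult powr_realpow'[symmetric] powr_powr)
  finally show ?thesis by (simp add: w_def)
qed

theorem lemma6:
  fixes X :: "(real \<Rightarrow> real) set" and N :: "(real \<Rightarrow> real) \<Rightarrow> real" and p :: real
  assumes "ri_space X N" and "p > 0"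
  shows "\<exists>u c. 0 < u \<and> u \<le> p \<and>
    (\<forall>(n::nat) (fs :: nat \<Rightarrow> real \<Rightarrow> real). (\<forall>i<n. fs i \<in> X) \<longrightarrow>
       (\<lambda>x. (\<Sum>i<n. \<bar>fs i x\<bar> powr p) powr (1/p)) \<in> X \<and>
       N (\<lambda>x. (\<Sum>i<n. \<bar>fs i x\<bar> powr p) powr (1/p))
         \<le> c * (\<Sum>i<n. N (fs i) powr u) powr (1/u))"
proof -
  obtain K where K: "1 \<le> K"
    and triangle: "\<And>f g. f \<in> X \<Longrightarrow> g \<in> X \<Longrightarrow> N (\<lambda>x. f x + g x) \<le> K * (N f + N g)"
    using quasi_banach_quasi_triangle[OF ri_space_quasi_banach[OF assms(1)]] by blast
  define L where "L = (2 * (2 powr (1 / p) * K)) powr p"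
  obtain m :: nat where "2 * (L + L^2) < 2 ^ m" using real_arch_pow[of 2] by auto
  moreover have "(2::real) ^ m \<le> 2 ^ Suc m" by simp
  ultimately have m: "2 * (L + L^2) \<le> 2 ^ Suc m" by linarith
  show ?thesis
  proof (rule exI[of _ "p / Suc m"], rule exI[of _ "(2 * L^2) powr (1 / p)"], intro conjI allI impI)
    show "0 < p / Suc m" "p / Suc m \<le> p" using \<open>p > 0\<close> by (auto simp: field_simps)
    fix n and fs :: "nat \<Rightarrow> real \<Rightarrow> real" assume fs: "\<forall>i<n. fs i \<in> X"
    have "lp_sum p fs {..<n} \<in> X"
      by (rule ri_space_lp_sum_mem[OF assms]) (use fs in auto)
    moreover have "N (lp_sum p fs {..<n})
        \<le> (2 * L^2) powr (1 / p) * (\<Sum>i<n. N (fs i) powr (p / Suc m)) powr (Suc m / p)"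
      by (rule ri_space_lp_sum_norm_le[OF assms K triangle eq_reflection[OF L_def] m]) (use fs in auto)
    ultimately show "(\<lambda>x. (\<Sum>i<n. \<bar>fs i x\<bar> powr p) powr (1/p)) \<in> X"
      and "N (\<lambda>x. (\<Sum>i<n. \<bar>fs i x\<bar> powr p) powr (1/p))
        \<le> (2 * L^2) powr (1 / p) * (\<Sum>i<n. N (fs i) powr (p / Suc m)) powr (1 / (p / Suc m))"
      by (simp_all add: lp_sum_def)
  qed
qed

end
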